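(* Let $n\ge 2$, $\ell\ge 1$, and let $\mathcal{L}\in\mathcal{A}(n,n-2,\ell)$. The all-one vector $\mathbf{1}\in\mathbb{Z}^n$ can be covered only by a codeword of the form $\mathbf{1}-\lambda\mathbf{e}_i$ for some $1\le i\le n$ and some integer $0\le\lambda\le\ell$.
   Context: $\mathcal{S}(n,t,\ell)=\{\mathcal{E}\in\mathbb{Z}^n: 0\le\varepsilon_i\le\ell \text{ for all } i,\ w_H(\mathcal{E})\le t\}$, with $w_H$ the number of nonzero coordinates. A lattice here is the set of integer combinations of $n$ linearly independent vectors of $\mathbb{Z}^n$. $\mathcal{A}(n,t,\ell)$ is the set of lattices $\mathcal{L}\subseteq\mathbb{Z}^n$ such that the translates $X+\mathcal{S}(n,t,\ell)$, $X\in\mathcal{L}$, are pairwise disjoint; elements of $\mathcal{L}$ are codewords. A codeword $X\in\mathcal{L}$ covers $Y\in\mathbb{Z}^n$ if $Y=X+\mathcal{E}$ for some $\mathcal{E}\in\mathcal{S}(n,n-2,\ell)$. $\mathbf{e}_i$ is the $i$-th unit vector. *)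

theory Defs
  imports Complex_Main
begin

text \<open>Vectors of Z^n are modelled as functions nat => int vanishing outside {0..<n}
  (coordinates indexed 0..n-1).\<close>

definition zvec :: "nat \<Rightarrow> (nat \<Rightarrow> int) set" where
  "zvec n = {x. \<forall>i\<ge>n. x i = 0}"

definition wH :: "nat \<Rightarrow> (nat \<Rightarrow> int) \<Rightarrow> nat" where
  "wH n x = card {i. i < n \<and> x i \<noteq> 0}"

definition Sset :: "nat \<Rightarrow> nat \<Rightarrow> int \<Rightarrow> (nat \<Rightarrow> int) set" where
  "Sset n t l = {e \<in> zvec n. (\<forall>i<n. 0 \<le> e i \<and> e i \<le> l) \<and> wH n e \<le> t}"

definition is_lattice :: "nat \<Rightarrow> (nat \<Rightarrow> int) set \<Rightarrow> bool" where
  "is_lattice n L \<longleftrightarrow> (\<exists>b :: nat \<Rightarrow> nat \<Rightarrow> int.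
     (\<forall>j<n. b j \<in> zvec n) \<and>
     (\<forall>c :: nat \<Rightarrow> real. (\<forall>i<n. (\<Sum>j<n. c j * real_of_int (b j i)) = 0) \<longrightarrow> (\<forall>j<n. c j = 0)) \<and>
     L = {x. \<exists>c :: nat \<Rightarrow> int. x = (\<lambda>i. \<Sum>j<n. c j * b j i)})"

definition Aset :: "nat \<Rightarrow> nat \<Rightarrow> int \<Rightarrow> (nat \<Rightarrow> int) set set" where
  "Aset n t l = {L. is_lattice n L \<and>
     (\<forall>X\<in>L. \<forall>Y\<in>L. X \<noteq> Y \<longrightarrow> ((\<lambda>e i. X i + e i) ` Sset n t l) \<inter> ((\<lambda>e i. Y i + e i) ` Sset n t l) = {})}"

definition covers :: "nat \<Rightarrow> int \<Rightarrow> (nat \<Rightarrow> int) \<Rightarrow> (nat \<Rightarrow> int) \<Rightarrow> bool" where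
  "covers n l X Y \<longleftrightarrow> (\<exists>e\<in>Sset n (n - 2) l. Y = (\<lambda>i. X i + e i))"

definition onevec :: "nat \<Rightarrow> nat \<Rightarrow> int" where
  "onevec n = (\<lambda>i. if i < n then 1 else 0)"

definition unitvec :: "nat \<Rightarrow> nat \<Rightarrow> int" where
  "unitvec k = (\<lambda>i. if i = k then 1 else 0)"

end

theory Submission
  imports Defs
begin

text \<open>Write the all-one vector as \<open>X + e\<close> with \<open>e \<in> S(n, n-2, \<ell>)\<close>. If \<open>e\<close> has at most one
  nonzero entry, \<open>X\<close> has the claimed form. Otherwise, with \<open>N\<close> the support of \<open>e\<close>, the indicator
  vector \<open>a\<close> of the complement of \<open>N\<close> has weight \<open>n - |N| \<le> n - 2\<close>, and \<open>c = e - 1\<close> on \<open>N\<close> (zero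
  elsewhere) has weight at most \<open>|N| \<le> n - 2\<close> and entries in \<open>[0, \<ell> - 1]\<close>. Then \<open>0 + a = X + c\<close>,
  so the packing property forces \<open>X = 0\<close>, which is impossible because \<open>X\<close> is \<open>1\<close> off \<open>N\<close>.\<close>

lemma zero_in_lattice:
  assumes "is_lattice n L"
  shows "(\<lambda>_. 0) \<in> L"
proof -
  obtain b where "L = {x. \<exists>c :: nat \<Rightarrow> int. x = (\<lambda>i. \<Sum>j<n. c j * b j i)}"
    using assms unfolding is_lattice_def by blast
  then show ?thesis by (auto intro: exI[of _ "\<lambda>_. 0"])
qed

lemma Aset_codeword_unique:
  assumes "L \<in> Aset n t l" and "X \<in> L" and "Y \<in> L"
    and "e \<in> Sset n t l" and "f \<in> Sset n t l"
    and "\<And>i. X i + e i = Y i + f i"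
  shows "X = Y"
proof (rule ccontr)
  assume "X \<noteq> Y"
  then have "((\<lambda>e i. X i + e i) ` Sset n t l) \<inter> ((\<lambda>e i. Y i + e i) ` Sset n t l) = {}"
    using assms(1-3) unfolding Aset_def by blast
  moreover have "(\<lambda>i. X i + e i) = (\<lambda>i. Y i + f i)"
    using assms(6) by blast
  ultimately show False
    using assms(4,5) by blast
qed

lemma wH_le_1_imp_unitvec_multiple:
  assumes "e \<in> zvec n" and "wH n e \<le> 1" and "0 < n"
  shows "\<exists>i<n. e = (\<lambda>j. e i * unitvec i j)"
proof -
  let ?N = "{i. i < n \<and> e i \<noteq> 0}"
  have "card ?N = 0 \<or> card ?N = 1"
    using assms(2) unfolding wH_def by linarith
  then show ?thesis
  proof
    assume "card ?N = 0"
    then have "e = (\<lambda>j. e 0 * unitvec 0 j)"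
      using assms(1) unfolding zvec_def unitvec_def by (auto simp: fun_eq_iff not_less)
    then show ?thesis
      using assms(3) by blast
  next
    assume "card ?N = 1"
    then obtain i where N: "?N = {i}"
      by (rule card_1_singletonE)
    have "e j = 0" if "j \<noteq> i" for j
      using N assms(1) that unfolding zvec_def by (cases "j < n") auto
    then have "e = (\<lambda>j. e i * unitvec i j)"
      unfolding unitvec_def by (auto simp: fun_eq_iff)
    moreover have "i < n"
      using N by auto
    ultimately show ?thesis
      by blast
  qed
qed

lemma wH_less_imp_zero_coord:
  assumes "wH n e < n"
  obtains k where "k < n" and "e k = 0"
proof -
  have "{i. i < n \<and> e i \<noteq> 0} \<noteq> {..<n}"
    using assms unfolding wH_def by (metis card_lessThan less_irrefl)
  then show ?thesis
    using that by blast
qed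

lemma heavy_error_common_point_with_zero:
  assumes "e \<in> Sset n (n - 2) l" and "2 \<le> wH n e" and "1 \<le> l"
  obtains a c where "a \<in> Sset n (n - 2) l" and "c \<in> Sset n (n - 2) l"
    and "\<And>i. a i = onevec n i - e i + c i"
proof -
  define N where "N = {i. i < n \<and> e i \<noteq> 0}"
  define a where "a = (\<lambda>k. if k < n \<and> e k = 0 then 1 else (0::int))"
  define c where "c = (\<lambda>k. if k < n \<and> e k \<noteq> 0 then e k - 1 else (0::int))"
  have e: "\<And>i. n \<le> i \<Longrightarrow> e i = 0" "\<And>i. i < n \<Longrightarrow> 0 \<le> e i \<and> e i \<le> l" "card N \<le> n - 2"
    using assms(1) unfolding Sset_def zvec_def wH_def N_def by auto
  have "{i. i < n \<and> a i \<noteq> 0} = {..<n} - N"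
    unfolding a_def N_def by auto
  then have "wH n a = n - card N"
    unfolding wH_def by (simp add: card_Diff_subset N_def subset_eq)
  then have "a \<in> Sset n (n - 2) l"
    using assms(2,3) unfolding Sset_def zvec_def wH_def N_def by (auto simp: a_def)
  moreover have "{i. i < n \<and> c i \<noteq> 0} \<subseteq> N"
    unfolding c_def N_def by auto
  then have "wH n c \<le> card N"
    unfolding wH_def by (simp add: card_mono N_def)
  then have "c \<in> Sset n (n - 2) l"
    using e unfolding Sset_def zvec_def by (force simp: c_def)
  moreover have "\<And>i. a i = onevec n i - e i + c i"
    using e(1) by (auto simp: a_def c_def onevec_def)
  ultimately show ?thesis
    using that by blast
qed

theorem mainTheorem15:
  fixes n :: nat and l :: int and L :: "(nat \<Rightarrow> int) set" and X :: "nat \<Rightarrow> int"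
  assumes "n \<ge> 2" and "l \<ge> 1" and "L \<in> Aset n (n - 2) l"
    and "X \<in> L" and "covers n l X (onevec n)"
  shows "\<exists>i<n. \<exists>lam::int. 0 \<le> lam \<and> lam \<le> l \<and> X = (\<lambda>j. onevec n j - lam * unitvec i j)"
proof -
  obtain e where e: "e \<in> Sset n (n - 2) l" and X: "X = (\<lambda>i. onevec n i - e i)"
    using assms(5) unfolding covers_def by (auto simp: fun_eq_iff algebra_simps)
  show ?thesis
  proof (cases "wH n e \<le> 1")
    case True
    then obtain i where "i < n" and "e = (\<lambda>j. e i * unitvec i j)"
      using wH_le_1_imp_unitvec_multiple[of e n] e assms(1) unfolding Sset_def by auto
    moreover have "0 \<le> e i \<and> e i \<le> l"
      using e \<open>i < n\<close> unfolding Sset_def by blast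
    ultimately show ?thesis
      unfolding X by metis
  next
    case False
    then have "2 \<le> wH n e"
      by simp
    obtain a c where a: "a \<in> Sset n (n - 2) l" and c: "c \<in> Sset n (n - 2) l"
      and ac: "\<And>i. a i = onevec n i - e i + c i"
      using heavy_error_common_point_with_zero[OF e \<open>2 \<le> wH n e\<close> assms(2)] by blast
    have lat: "is_lattice n L"
      using assms(3) by (simp add: Aset_def)
    have "\<And>i. 0 + a i = X i + c i"
      using ac X by simp
    from Aset_codeword_unique[OF assms(3) zero_in_lattice[OF lat] assms(4) a c this]
    have X0: "(\<lambda>_. 0) = X" .
    have "wH n e < n"
      using e assms(1) unfolding Sset_def by auto
    then obtain k where "k < n" "e k = 0"
      by (rule wH_less_imp_zero_coord)
    then have "X k = 1"
      unfolding X onevec_def by simp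
    with X0 show ?thesis
      by (metis zero_neq_one)
  qed
qed

end
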